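(* Let $a,b\in\mathbb{R}^+\cup\{\infty\}$, $n\ge1$, and $\Lambda:=(-a,b)\times\mathbb{R}^n\times\mathbb{R}$ with points written $(U,X,V)$. Assume: (1) For $\varepsilon\in(0,1]$, $t_\varepsilon:\Lambda\to\Lambda$, $t_\varepsilon(U,X,V)=(U,\,x_\varepsilon(U,X),\,V+g_\varepsilon(U,X)+h_\varepsilon(U,X))$ with $x_\varepsilon\in C^\infty((-a,b)\times\mathbb{R}^n,\mathbb{R}^n)$ and $g_\varepsilon,h_\varepsilon\in C^\infty((-a,b)\times\mathbb{R}^n,\mathbb{R})$; $(t_\varepsilon)_\varepsilon$ has property (E); and $(h_\varepsilon)_\varepsilon$ is uniformly bounded on compact subsets of $(-a,b)\times\mathbb{R}^n$ (for small $\varepsilon$). (2) $s_\varepsilon:\Lambda\to\Lambda$, $s_\varepsilon(U,X,V)=(U,\,x_\varepsilon(U,X),\,V+g_\varepsilon(U,X))$, and $(s_\varepsilon)_\varepsilon$ has property (E). (3) $s:\Lambda\to\Lambda$, $s(U,X,V)=(U,\,x(U,X),\,V+g(U,X))$ with $x\in C((-a,b)\times\mathbb{R}^n,\mathbb{R}^n)$, $g\in C((-a,b)\times\mathbb{R}^n,\mathbb{R})$, and there is an open set $W\subseteq(-a,b)\times\mathbb{R}^n$ containing $(-a,0]\times\mathbb{R}^n$ such that $\hat s:=(U,x):(-a,b)\times\mathbb{R}^n\to(-a,b)\times\mathbb{R}^n$ is injective on $W$. (4) $s_\varepsilon\to s$ as $\varepsilon\to0$ uniformly on compact subsets of $\Lambda$.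 Then for every point $p\in\Lambda$ with $U$-coordinate $0$ there exist an open neighbourhood $P$ of $p$ with $P\subseteq W\times\mathbb{R}$, an open neighbourhood $Q$ of $q:=s(p)$ with $Q\subseteq s(W\times\mathbb{R})$, and $\varepsilon_0\in(0,1]$ such that $\overline Q\subseteq t_\varepsilon(P)$ for all $\varepsilon\le\varepsilon_0$.
   Context: Property (E): a net $(u_\varepsilon)_\varepsilon$ of smooth maps $(-a,b)\times\mathbb{R}^n\times\mathbb{R}\to(-a,b)\times\mathbb{R}^n\times\mathbb{R}$ has property (E) if for every compact $K\subseteq\mathbb{R}^n$ there exist $\alpha\in(0,b)$ and $\varepsilon_0\in(0,1]$ such that $u_\varepsilon$ is injective on $(-a,\alpha]\times K\times\mathbb{R}$ for all $\varepsilon\le\varepsilon_0$. *)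

theory Defs
  imports "HOL-Analysis.Analysis" "HOL-Library.Extended_Real"
begin

text \<open>Iterated partial derivatives along a list of directions, on a set S.
  has_iter_partial S f ds g: g is obtained from f by successively
  differentiating along the directions in ds (the last one applied first is the
  innermost, i.e. the head of the list is the last derivative taken).\<close>
inductive has_iter_partial ::
  "'a::euclidean_space set \<Rightarrow> ('a \<Rightarrow> 'b::real_normed_vector) \<Rightarrow> 'a list \<Rightarrow> ('a \<Rightarrow> 'b) \<Rightarrow> bool"
  for S f where
  nil: "has_iter_partial S f [] f"
| cons: "has_iter_partial S f ds h \<Longrightarrow>
         (\<forall>x\<in>S. ((\<lambda>t. h (x + t *\<^sub>R d)) has_vector_derivative g x) (at 0)) \<Longrightarrow>
         has_iter_partial S f (d # ds) g"

definition smooth_on :: "'a::euclidean_space set \<Rightarrow> ('a \<Rightarrow> 'b::real_normed_vector) \<Rightarrow> bool" where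
  "smooth_on S f \<longleftrightarrow>
     (\<forall>ds. set ds \<subseteq> Basis \<longrightarrow> (\<exists>g. has_iter_partial S f ds g \<and> continuous_on S g))"

definition strip :: "ereal \<Rightarrow> ereal \<Rightarrow> (real \<times> 'x) set" where
  "strip a b = {(U, X). - a < ereal U \<and> ereal U < b}"

definition Lam :: "ereal \<Rightarrow> ereal \<Rightarrow> (real \<times> 'x \<times> real) set" where
  "Lam a b = {(U, X, V). - a < ereal U \<and> ereal U < b}"

definition propE :: "ereal \<Rightarrow> ereal \<Rightarrow> (real \<Rightarrow> real \<times> 'x::topological_space \<times> real \<Rightarrow> real \<times> 'x \<times> real) \<Rightarrow> bool" where
  "propE a b u \<longleftrightarrow>
     (\<forall>K. compact K \<longrightarrow>
        (\<exists>\<alpha> \<epsilon>0. 0 < \<alpha> \<and> ereal \<alpha> < b \<and> 0 < \<epsilon>0 \<and> \<epsilon>0 \<le> 1 \<and>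
           (\<forall>\<epsilon>. 0 < \<epsilon> \<and> \<epsilon> \<le> \<epsilon>0 \<longrightarrow>
              inj_on (u \<epsilon>) {(U, X, V). - a < ereal U \<and> U \<le> \<alpha> \<and> X \<in> K})))"

end

theory Submission
  imports Defs
begin

(* All maps in the theorem are shears
     (U, X, V) \<mapsto> (U, y(U,X), V + k(U,X))
   over a base map (U, X) \<mapsto> (U, y(U,X)).  A shear maps the cylinder A \<times> \<real>
   onto the cylinder over the image of A under its base map, so covering
   statements for the shears reduce to covering statements for the base maps.
   For those, the essential topological fact is the stability of local
   surjectivity of an injective continuous map under uniformly small continuous
   perturbations: by invariance of domain, the image of a small closed ball
   around w0 under the limit base map contains a ball around its image point,
   and a Brouwer fixed point argument shows that every uniformly close
   perturbation still covers a ball of half the radius.  Uniform convergence of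
   the shears on compact sets yields uniform convergence of the base maps, so
   this applies to the base maps of s\<^sub>\<epsilon> for small \<epsilon>; t\<^sub>\<epsilon> has the same base map. *)

text \<open>A smooth function is in particular continuous: take the empty list of
  derivative directions.\<close>

lemma smooth_on_imp_continuous_on:
  assumes "smooth_on S f"
  shows "continuous_on S f"
proof -
  obtain g where g: "has_iter_partial S f [] g" and "continuous_on S g"
    using assms unfolding smooth_on_def by (metis empty_subsetI list.set(1))
  moreover have "g = f"
    using g by (cases rule: has_iter_partial.cases) auto
  ultimately show ?thesis by simp
qed

text \<open>The preimage
  of y is obtained as a fixed point of z \<mapsto> z - g(f\<inverse>(z)) + y.\<close>

lemma perturbation_of_injection_covers_cball:
  fixes f g :: "'a::metric_space \<Rightarrow> 'b::euclidean_space"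
  assumes "compact S" and f_cont: "continuous_on S f" and f_inj: "inj_on f S"
    and "0 < r" and f_covers: "cball y0 r \<subseteq> f ` S"
    and g_cont: "continuous_on S g"
    and g_close: "\<And>w. w \<in> S \<Longrightarrow> dist (g w) (f w) \<le> r - \<rho>"
  shows "cball y0 \<rho> \<subseteq> g ` S"
proof
  fix y assume y: "y \<in> cball y0 \<rho>"
  define h where "h = the_inv_into S f"
  have h_cont: "continuous_on (cball y0 r) h"
    using continuous_on_inv_into[OF f_cont \<open>compact S\<close> f_inj] f_covers
    unfolding h_def by (rule continuous_on_subset)
  have h_in: "h z \<in> S" and f_h: "f (h z) = z" if "z \<in> cball y0 r" for z
    using that f_covers f_inj unfolding h_def
    by (auto simp: the_inv_into_f_f the_inv_into_into)
  define \<phi> where "\<phi> z = z - g (h z) + y" for z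
  have "continuous_on (cball y0 r) \<phi>"
    unfolding \<phi>_def using h_in
    by (intro continuous_intros continuous_on_compose2[OF g_cont h_cont]) auto
  moreover have "\<phi> \<in> cball y0 r \<rightarrow> cball y0 r"
  proof
    fix z assume z: "z \<in> cball y0 r"
    have "dist y0 (\<phi> z) = norm ((y0 - y) + (g (h z) - f (h z)))"
      using f_h[OF z] by (simp add: \<phi>_def dist_norm algebra_simps)
    also have "\<dots> \<le> dist y0 y + dist (g (h z)) (f (h z))"
      by (metis dist_norm norm_triangle_ineq)
    also have "\<dots> \<le> \<rho> + (r - \<rho>)"
      using y g_close[OF h_in[OF z]] by (intro add_mono) auto
    finally show "\<phi> z \<in> cball y0 r" by simp
  qed
  ultimately obtain z where z: "z \<in> cball y0 r" "\<phi> z = z"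
    using brouwer_ball[OF \<open>0 < r\<close>] by blast
  then have "g (h z) = y" by (simp add: \<phi>_def algebra_simps)
  then show "y \<in> g ` S" using h_in[OF z(1)] by blast
qed

lemma stable_cover_by_perturbations:
  fixes f :: "'a::euclidean_space \<Rightarrow> 'a" and fe :: "real \<Rightarrow> 'a \<Rightarrow> 'a"
  assumes "open W" and "w0 \<in> W"
    and f_cont: "continuous_on W f" and f_inj: "inj_on f W"
    and fe_cont: "\<And>\<epsilon>. 0 < \<epsilon> \<Longrightarrow> \<epsilon> \<le> 1 \<Longrightarrow> continuous_on W (fe \<epsilon>)"
    and fe_conv: "\<And>K. compact K \<Longrightarrow> K \<subseteq> W \<Longrightarrow> uniform_limit K fe f (at_right 0)"
  obtains r \<epsilon>0 where "0 < r" "0 < \<epsilon>0" "\<epsilon>0 \<le> 1" "cball (f w0) r \<subseteq> f ` W"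
    "\<And>\<epsilon>. 0 < \<epsilon> \<Longrightarrow> \<epsilon> \<le> \<epsilon>0 \<Longrightarrow> cball (f w0) r \<subseteq> fe \<epsilon> ` W"
proof -
  obtain \<delta> where "0 < \<delta>" and B_W: "cball w0 \<delta> \<subseteq> W"
    using \<open>open W\<close> \<open>w0 \<in> W\<close> open_contains_cball by blast
  define B where "B = cball w0 \<delta>"
  have f_cont_B: "continuous_on B f"
    using f_cont B_W unfolding B_def by (rule continuous_on_subset)
  have f_inj_B: "inj_on f B"
    using f_inj B_W unfolding B_def by (rule inj_on_subset)
  have "open (f ` ball w0 \<delta>)"
    using f_cont_B \<open>0 < \<delta>\<close> f_inj_B unfolding B_def by (rule invariance_of_domain_ball)
  moreover have "f w0 \<in> f ` ball w0 \<delta>" using \<open>0 < \<delta>\<close> by simp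
  ultimately obtain R where "0 < R" and R_cover: "cball (f w0) R \<subseteq> f ` ball w0 \<delta>"
    using open_contains_cball by blast
  define r where "r = R / 2"
  have "0 < r" using \<open>0 < R\<close> by (simp add: r_def)
  have "uniform_limit B fe f (at_right 0)"
    using compact_cball B_W unfolding B_def by (rule fe_conv)
  then have "\<forall>\<^sub>F \<epsilon> in at_right 0. \<forall>w\<in>B. dist (fe \<epsilon> w) (f w) < r"
    using \<open>0 < r\<close> unfolding uniform_limit_iff by blast
  then obtain e where "0 < e"
    and close: "\<And>\<epsilon> w. 0 < \<epsilon> \<Longrightarrow> \<epsilon> < e \<Longrightarrow> w \<in> B \<Longrightarrow> dist (fe \<epsilon> w) (f w) < r"
    unfolding eventually_at_right_field by auto
  define \<epsilon>0 where "\<epsilon>0 = min (e / 2) 1"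
  have "0 < \<epsilon>0" "\<epsilon>0 \<le> 1" "\<epsilon>0 < e" using \<open>0 < e\<close> by (auto simp: \<epsilon>0_def)
  have R_cover_B: "cball (f w0) R \<subseteq> f ` B"
    using R_cover ball_subset_cball unfolding B_def by blast
  have "cball (f w0) r \<subseteq> cball (f w0) R"
    using \<open>0 < R\<close> by (intro subset_cball) (simp add: r_def)
  also have "\<dots> \<subseteq> f ` B" by (rule R_cover_B)
  also have "\<dots> \<subseteq> f ` W" using B_W unfolding B_def by (rule image_mono)
  finally have f_covers: "cball (f w0) r \<subseteq> f ` W" .
  have fe_covers: "cball (f w0) r \<subseteq> fe \<epsilon> ` W" if "0 < \<epsilon>" "\<epsilon> \<le> \<epsilon>0" for \<epsilon>
  proof -
    have "continuous_on W (fe \<epsilon>)"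
      using fe_cont that \<open>\<epsilon>0 \<le> 1\<close> by simp
    then have fe_cont_B: "continuous_on B (fe \<epsilon>)"
      using B_W unfolding B_def by (rule continuous_on_subset)
    have fe_close: "dist (fe \<epsilon> w) (f w) \<le> R - r" if "w \<in> B" for w
      using close[OF \<open>0 < \<epsilon>\<close> _ that] \<open>\<epsilon> \<le> \<epsilon>0\<close> \<open>\<epsilon>0 < e\<close> by (simp add: r_def)
    have "cball (f w0) r \<subseteq> fe \<epsilon> ` B"
      using compact_cball f_cont_B f_inj_B \<open>0 < R\<close> R_cover_B fe_cont_B fe_close
      unfolding B_def by (rule perturbation_of_injection_covers_cball)
    also have "\<dots> \<subseteq> fe \<epsilon> ` W" using B_W unfolding B_def by (rule image_mono)
    finally show ?thesis .
  qed
  show thesis using that[OF \<open>0 < r\<close> \<open>0 < \<epsilon>0\<close> \<open>\<epsilon>0 \<le> 1\<close> f_covers fe_covers] .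
qed

definition cylinder :: "('u \<times> 'x) set \<Rightarrow> ('u \<times> 'x \<times> 'v) set" where
  "cylinder A = {(U, X, V). (U, X) \<in> A}"

lemma cylinder_vimage: "cylinder A = (\<lambda>(U, X, V). (U, X)) -` A"
  by (auto simp: cylinder_def)

lemma cylinder_mono: "A \<subseteq> B \<Longrightarrow> cylinder A \<subseteq> cylinder B"
  by (auto simp: cylinder_def)

lemma continuous_on_forget_last:
  "continuous_on UNIV
     (\<lambda>(U :: 'u::topological_space, X :: 'x::topological_space, V :: 'v::topological_space). (U, X))"
  by (simp add: case_prod_unfold continuous_on_Pair continuous_on_fst continuous_on_snd)

lemma open_cylinder:
  "open A \<Longrightarrow>
   open (cylinder A :: ('u::topological_space \<times> 'x::topological_space \<times> 'v::topological_space) set)"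
  unfolding cylinder_vimage by (rule open_vimage[OF _ continuous_on_forget_last])

lemma closed_cylinder:
  "closed A \<Longrightarrow>
   closed (cylinder A :: ('u::topological_space \<times> 'x::topological_space \<times> 'v::topological_space) set)"
  unfolding cylinder_vimage by (rule closed_vimage[OF _ continuous_on_forget_last])

definition base_map :: "('u \<times> 'x \<Rightarrow> 'y) \<Rightarrow> 'u \<times> 'x \<Rightarrow> 'u \<times> 'y" where
  "base_map y = (\<lambda>(U, X). (U, y (U, X)))"

definition shear ::
    "('u \<times> 'x \<Rightarrow> 'y) \<Rightarrow> ('u \<times> 'x \<Rightarrow> 'v::plus) \<Rightarrow> 'u \<times> 'x \<times> 'v \<Rightarrow> 'u \<times> 'y \<times> 'v" where
  "shear y k = (\<lambda>(U, X, V). (U, y (U, X), V + k (U, X)))"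

lemma continuous_on_base_map:
  fixes y :: "'u::topological_space \<times> 'x::topological_space \<Rightarrow> 'y::topological_space"
  shows "continuous_on A y \<Longrightarrow> continuous_on A (base_map y)"
  unfolding base_map_def case_prod_unfold
  by (simp add: continuous_on_Pair continuous_on_fst)

text \<open>A shear maps the cylinder over A onto the cylinder over the image of A
  under its base map: the fibre coordinate can be corrected by -k.\<close>

lemma shear_image_cylinder:
  fixes y :: "'u \<times> 'x \<Rightarrow> 'y" and k :: "'u \<times> 'x \<Rightarrow> 'v::group_add"
  shows "shear y k ` cylinder A = cylinder (base_map y ` A)"
proof
  show "shear y k ` cylinder A \<subseteq> cylinder (base_map y ` A)"
    by (force simp: shear_def base_map_def cylinder_def)
  show "cylinder (base_map y ` A) \<subseteq> shear y k ` cylinder A"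
  proof
    fix q :: "'u \<times> 'y \<times> 'v" assume "q \<in> cylinder (base_map y ` A)"
    then obtain U X V where q: "q = (U, y (U, X), V)" and "(U, X) \<in> A"
      by (auto simp: cylinder_def base_map_def)
    then have "shear y k (U, X, V - k (U, X)) = q" and "(U, X, V - k (U, X)) \<in> cylinder A"
      by (simp_all add: shear_def cylinder_def)
    then show "q \<in> shear y k ` cylinder A" by (metis image_eqI)
  qed
qed

lemma uniform_limit_base_maps:
  fixes ye :: "'i \<Rightarrow> 'u::metric_space \<times> 'x \<Rightarrow> 'y::metric_space"
    and ke :: "'i \<Rightarrow> 'u \<times> 'x \<Rightarrow> 'v::real_normed_vector"
  assumes "uniform_limit ((\<lambda>(U, X). (U, X, 0)) ` K) (\<lambda>i. shear (ye i) (ke i)) (shear y k) F"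
  shows "uniform_limit K (\<lambda>i. base_map (ye i)) (base_map y) F"
proof -
  have dist_le: "dist (base_map y1 (U, X)) (base_map y2 (U, X))
      \<le> dist (shear y1 k1 (U, X, 0)) (shear y2 k2 (U, X, 0))"
    for y1 y2 :: "'u \<times> 'x \<Rightarrow> 'y" and k1 k2 :: "'u \<times> 'x \<Rightarrow> 'v" and U X
    by (simp add: base_map_def shear_def dist_Pair_Pair)
  show ?thesis
    unfolding uniform_limit_iff
  proof (intro allI impI)
    fix e :: real assume "0 < e"
    then have "\<forall>\<^sub>F i in F. \<forall>w\<in>(\<lambda>(U, X). (U, X, 0)) ` K.
        dist (shear (ye i) (ke i) w) (shear y k w) < e"
      using assms unfolding uniform_limit_iff by blast
    then show "\<forall>\<^sub>F i in F. \<forall>w\<in>K. dist (base_map (ye i) w) (base_map y w) < e"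
      by eventually_elim (force intro: le_less_trans[OF dist_le])
  qed
qed

lemma compact_zero_section:
  fixes K :: "('u::topological_space \<times> 'x::topological_space) set"
  assumes "compact K"
  shows "compact ((\<lambda>(U, X). (U, X, 0::real)) ` K)"
proof -
  have "continuous_on K (\<lambda>(U, X). (U, X, 0::real))"
    by (simp add: case_prod_unfold continuous_on_Pair continuous_on_fst continuous_on_snd)
  then show ?thesis using assms by (rule compact_continuous_image)
qed

lemma zero_section_subset_Lam:
  "K \<subseteq> strip a b \<Longrightarrow> (\<lambda>(U, X). (U, X, 0::real)) ` K \<subseteq> Lam a b"
  by (auto simp: Lam_def strip_def)

lemma stable_cover_by_shears:
  fixes y :: "real \<times> 'x::euclidean_space \<Rightarrow> 'x" and ye :: "real \<Rightarrow> real \<times> 'x \<Rightarrow> 'x"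
    and k :: "real \<times> 'x \<Rightarrow> real" and ke kt :: "real \<Rightarrow> real \<times> 'x \<Rightarrow> real"
  assumes "open W" and "(Up, Xp) \<in> W"
    and y_cont: "continuous_on W y" and base_inj: "inj_on (base_map y) W"
    and ye_cont: "\<And>\<epsilon>. 0 < \<epsilon> \<Longrightarrow> \<epsilon> \<le> 1 \<Longrightarrow> continuous_on W (ye \<epsilon>)"
    and conv: "\<And>K. compact K \<Longrightarrow> K \<subseteq> W \<Longrightarrow>
      uniform_limit ((\<lambda>(U, X). (U, X, 0)) ` K) (\<lambda>\<epsilon>. shear (ye \<epsilon>) (ke \<epsilon>)) (shear y k) (at_right 0)"
  obtains Q \<epsilon>0 where "open Q" "shear y k (Up, Xp, Vp) \<in> Q" "Q \<subseteq> shear y k ` cylinder W"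
    "0 < \<epsilon>0" "\<epsilon>0 \<le> 1" "\<And>\<epsilon>. 0 < \<epsilon> \<Longrightarrow> \<epsilon> \<le> \<epsilon>0 \<Longrightarrow> closure Q \<subseteq> shear (ye \<epsilon>) (kt \<epsilon>) ` cylinder W"
proof -
  have base_e_cont: "continuous_on W (base_map (ye \<epsilon>))" if "0 < \<epsilon>" "\<epsilon> \<le> 1" for \<epsilon>
    using ye_cont[OF that] by (rule continuous_on_base_map)
  have base_conv: "uniform_limit K (\<lambda>\<epsilon>. base_map (ye \<epsilon>)) (base_map y) (at_right 0)"
    if "compact K" "K \<subseteq> W" for K
    using conv[OF that] by (rule uniform_limit_base_maps)
  define c where "c = base_map y (Up, Xp)"
  obtain r \<epsilon>0 where "0 < r" "0 < \<epsilon>0" "\<epsilon>0 \<le> 1"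
    and cover: "cball c r \<subseteq> base_map y ` W"
    and cover_e: "\<And>\<epsilon>. 0 < \<epsilon> \<Longrightarrow> \<epsilon> \<le> \<epsilon>0 \<Longrightarrow> cball c r \<subseteq> base_map (ye \<epsilon>) ` W"
    using stable_cover_by_perturbations[OF \<open>open W\<close> \<open>(Up, Xp) \<in> W\<close>
        continuous_on_base_map[OF y_cont] base_inj base_e_cont base_conv]
    unfolding c_def by metis
  define Q :: "(real \<times> 'x \<times> real) set" where "Q = cylinder (ball c r)"
  have Q_sub: "Q \<subseteq> cylinder (cball c r)"
    unfolding Q_def by (intro cylinder_mono ball_subset_cball)
  have "closure Q \<subseteq> cylinder (cball c r)"
    using Q_sub closed_cylinder[OF closed_cball] by (rule closure_minimal)
  then have "closure Q \<subseteq> shear (ye \<epsilon>) (kt \<epsilon>) ` cylinder W" if "0 < \<epsilon>" "\<epsilon> \<le> \<epsilon>0" for \<epsilon>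
    using cylinder_mono[OF cover_e[OF that]] unfolding shear_image_cylinder by blast
  moreover have "Q \<subseteq> shear y k ` cylinder W"
    using Q_sub cylinder_mono[OF cover] unfolding shear_image_cylinder by blast
  moreover have "open Q"
    unfolding Q_def by (intro open_cylinder open_ball)
  moreover have "shear y k (Up, Xp, Vp) \<in> Q"
    using \<open>0 < r\<close> by (simp add: Q_def c_def shear_def base_map_def cylinder_def)
  ultimately show thesis
    using that \<open>0 < \<epsilon>0\<close> \<open>\<epsilon>0 \<le> 1\<close> by blast
qed

theorem theorem8p2:
  fixes a b :: ereal
    and xe :: "real \<Rightarrow> real \<times> (real^'n) \<Rightarrow> (real^'n)"
    and ge he :: "real \<Rightarrow> real \<times> (real^'n) \<Rightarrow> real"
    and x :: "real \<times> (real^'n) \<Rightarrow> (real^'n)"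
    and g :: "real \<times> (real^'n) \<Rightarrow> real"
    and W :: "(real \<times> (real^'n)) set"
    and t se :: "real \<Rightarrow> real \<times> (real^'n) \<times> real \<Rightarrow> real \<times> (real^'n) \<times> real"
    and s :: "real \<times> (real^'n) \<times> real \<Rightarrow> real \<times> (real^'n) \<times> real"
  assumes a_pos: "0 < a" and b_pos: "0 < b"
    and t_def: "\<And>\<epsilon>. t \<epsilon> = (\<lambda>(U, X, V). (U, xe \<epsilon> (U, X), V + ge \<epsilon> (U, X) + he \<epsilon> (U, X)))"
    and xe_smooth: "\<And>\<epsilon>. 0 < \<epsilon> \<Longrightarrow> \<epsilon> \<le> 1 \<Longrightarrow> smooth_on (strip a b) (xe \<epsilon>)"
    and ge_smooth: "\<And>\<epsilon>. 0 < \<epsilon> \<Longrightarrow> \<epsilon> \<le> 1 \<Longrightarrow> smooth_on (strip a b) (ge \<epsilon>)"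
    and he_smooth: "\<And>\<epsilon>. 0 < \<epsilon> \<Longrightarrow> \<epsilon> \<le> 1 \<Longrightarrow> smooth_on (strip a b) (he \<epsilon>)"
    and t_E: "propE a b t"
    and he_bdd: "\<And>K. compact K \<Longrightarrow> K \<subseteq> strip a b \<Longrightarrow>
                   \<exists>C \<epsilon>0. 0 < \<epsilon>0 \<and> (\<forall>\<epsilon>. 0 < \<epsilon> \<and> \<epsilon> \<le> \<epsilon>0 \<longrightarrow> (\<forall>y\<in>K. \<bar>he \<epsilon> y\<bar> \<le> C))"
    and se_def: "\<And>\<epsilon>. se \<epsilon> = (\<lambda>(U, X, V). (U, xe \<epsilon> (U, X), V + ge \<epsilon> (U, X)))"
    and se_E: "propE a b se"
    and s_def: "s = (\<lambda>(U, X, V). (U, x (U, X), V + g (U, X)))"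
    and x_cont: "continuous_on (strip a b) x"
    and g_cont: "continuous_on (strip a b) g"
    and W_open: "open W" and W_sub: "W \<subseteq> strip a b"
    and W_contains: "{(U, X). - a < ereal U \<and> U \<le> 0} \<subseteq> W"
    and s_hat_inj: "inj_on (\<lambda>(U, X). (U, x (U, X))) W"
    and conv: "\<And>K. compact K \<Longrightarrow> K \<subseteq> Lam a b \<Longrightarrow> uniform_limit K se s (at_right 0)"
  shows "\<forall>p \<in> Lam a b. fst p = 0 \<longrightarrow>
           (\<exists>P Q \<epsilon>0. open P \<and> p \<in> P \<and> P \<subseteq> {(U, X, V). (U, X) \<in> W} \<and>
                    open Q \<and> s p \<in> Q \<and> Q \<subseteq> s ` {(U, X, V). (U, X) \<in> W} \<and>
                    0 < \<epsilon>0 \<and> \<epsilon>0 \<le> 1 \<and>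
                    (\<forall>\<epsilon>. 0 < \<epsilon> \<and> \<epsilon> \<le> \<epsilon>0 \<longrightarrow> closure Q \<subseteq> t \<epsilon> ` P))"
proof (intro ballI impI)
  fix p :: "real \<times> (real^'n) \<times> real"
  assume "fst p = 0"
  then obtain X0 V0 where p: "p = (0, X0, V0)" by (cases p) auto
  have "- a < ereal 0" using a_pos by (cases a) (auto simp: zero_ereal_def)
  then have X0_W: "(0, X0) \<in> W" using W_contains by auto
  have s_shear: "s = shear x g"
    unfolding s_def shear_def ..
  have se_shear: "se \<epsilon> = shear (xe \<epsilon>) (ge \<epsilon>)" for \<epsilon>
    unfolding se_def shear_def ..
  have t_shear: "t \<epsilon> = shear (xe \<epsilon>) (\<lambda>w. ge \<epsilon> w + he \<epsilon> w)" for \<epsilon>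
    unfolding t_def shear_def by (simp add: add.assoc)
  have zero_section_conv:
    "uniform_limit ((\<lambda>(U, X). (U, X, 0)) ` K) (\<lambda>\<epsilon>. shear (xe \<epsilon>) (ge \<epsilon>)) (shear x g) (at_right 0)"
    if "compact K" "K \<subseteq> W" for K
  proof -
    have "compact ((\<lambda>(U, X). (U, X, 0::real)) ` K)"
      using that(1) by (rule compact_zero_section)
    moreover have "(\<lambda>(U, X). (U, X, 0::real)) ` K \<subseteq> Lam a b"
      using order_trans[OF that(2) W_sub] by (rule zero_section_subset_Lam)
    ultimately show ?thesis
      unfolding se_shear[symmetric] s_shear[symmetric] by (rule conv)
  qed
  have base_inj: "inj_on (base_map x) W"
    using s_hat_inj unfolding base_map_def .
  have xe_cont: "continuous_on W (xe \<epsilon>)" if "0 < \<epsilon>" "\<epsilon> \<le> 1" for \<epsilon>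
    using smooth_on_imp_continuous_on[OF xe_smooth[OF that]] W_sub by (rule continuous_on_subset)
  have "open (cylinder W)"
    using W_open by (rule open_cylinder)
  have "p \<in> cylinder W" and P_eq: "{(U, X, V). (U, X) \<in> W} = cylinder W"
    using X0_W by (simp_all add: p cylinder_def)
  show "\<exists>P Q \<epsilon>0. open P \<and> p \<in> P \<and> P \<subseteq> {(U, X, V). (U, X) \<in> W} \<and>
      open Q \<and> s p \<in> Q \<and> Q \<subseteq> s ` {(U, X, V). (U, X) \<in> W} \<and> 0 < \<epsilon>0 \<and> \<epsilon>0 \<le> 1 \<and>
      (\<forall>\<epsilon>. 0 < \<epsilon> \<and> \<epsilon> \<le> \<epsilon>0 \<longrightarrow> closure Q \<subseteq> t \<epsilon> ` P)"
  proof (rule stable_cover_by_shears[OF W_open X0_W continuous_on_subset[OF x_cont W_sub]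
        base_inj xe_cont zero_section_conv, where Vp = V0 and kt = "\<lambda>\<epsilon> w. ge \<epsilon> w + he \<epsilon> w"])
    fix Q \<epsilon>0
    assume "open Q" "shear x g (0, X0, V0) \<in> Q" "Q \<subseteq> shear x g ` cylinder W"
      "0 < \<epsilon>0" "\<epsilon>0 \<le> 1" and t_covers: "\<And>\<epsilon>. 0 < \<epsilon> \<Longrightarrow> \<epsilon> \<le> \<epsilon>0 \<Longrightarrow>
        closure Q \<subseteq> shear (xe \<epsilon>) (\<lambda>w. ge \<epsilon> w + he \<epsilon> w) ` cylinder W"
    then show ?thesis
      using \<open>open (cylinder W)\<close> \<open>p \<in> cylinder W\<close> unfolding P_eq p s_shear t_shear by blast
  qed
qed

end
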